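(* In $\mathrm{HMF}(\mathbb{C}^2,\Gamma_W,W)$ the objects $K_{x,1},\dots,K_{x,p-1}$ are exceptional (the graded endomorphisms of each are just the scalar multiples of the identity, in degree $0$) and pairwise orthogonal (all graded morphisms between distinct ones vanish).
   Context: Let $p,q\ge2$ be integers and $W=x^py+xy^q$. Let $L$ be the abelian group generated by $\vec x,\vec y,\vec c$ modulo $p\vec x+\vec y=\vec x+q\vec y=\vec c$; $S=\mathbb{C}[x,y]$ is $L$-graded with $\deg x=\vec x$, $\deg y=\vec y$, and $R=S/(W)$; $M(l)_k=M_{k+l}$. $\mathrm{HMF}(\mathbb{C}^2,\Gamma_W,W)$ is the homotopy (cohomology) category of $L$-graded matrix factorisations of $W$, equivalent to $D^b(\mathrm{gr}R)/\mathrm{Perf}(\mathrm{gr}R)$; a finitely generated $L$-graded $R$-module is identified with the corresponding object (its stabilisation). Graded morphisms mean $\mathrm{Hom}^n(X,Y)=\mathrm{Hom}(X,Y[n])$ for all $n\in\mathbb{Z}$. $K_x=R/(x)$ and $K_{x,i}=K_x((i+1-p)\vec x)$ for $1\le i\le p-1$. *)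

theory Defs
  imports "HOL-Computational_Algebra.Polynomial"
begin

text \<open>Polynomials in C[x,y] are represented as complex poly poly: the outer variable is y,
  the inner variable is x, so the coefficient of x^i y^j of f is coeff (coeff f j) i.\<close>

type_synonym spoly = "complex poly poly"

definition Xp :: spoly where "Xp = [:[:0, 1:]:]"
definition Yp :: spoly where "Yp = [:0, 1:]"

definition W :: "nat \<Rightarrow> nat \<Rightarrow> spoly" where
  "W p q = Xp ^ p * Yp + Xp * Yp ^ q"

text \<open>Elements of the grading group L are represented by integer triples (a,b,c) meaning
  a x + b y + c c, modulo the relations p x + y - c = 0 and x + q y - c = 0.\<close>

type_synonym lvec = "int \<times> int \<times> int"

fun Lrel :: "nat \<Rightarrow> nat \<Rightarrow> lvec \<Rightarrow> lvec \<Rightarrow> bool" where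
  "Lrel p q (a, b, c) (a', b', c') =
     (\<exists>m n :: int. a - a' = m * int p + n \<and> b - b' = m + n * int q \<and> c - c' = - m - n)"

fun lplus :: "lvec \<Rightarrow> lvec \<Rightarrow> lvec" where
  "lplus (a, b, c) (a', b', c') = (a + a', b + b', c + c')"

fun lminus :: "lvec \<Rightarrow> lvec \<Rightarrow> lvec" where
  "lminus (a, b, c) (a', b', c') = (a - a', b - b', c - c')"

fun lsmul :: "int \<Rightarrow> lvec \<Rightarrow> lvec" where
  "lsmul k (a, b, c) = (k * a, k * b, k * c)"

definition vx :: lvec where "vx = (1, 0, 0)"
definition vy :: lvec where "vy = (0, 1, 0)"
definition vc :: lvec where "vc = (0, 0, 1)"

definition homog :: "nat \<Rightarrow> nat \<Rightarrow> spoly \<Rightarrow> lvec \<Rightarrow> bool" where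
  "homog p q f d \<longleftrightarrow> (\<forall>i j. coeff (coeff f j) i \<noteq> 0 \<longrightarrow> Lrel p q (int i, int j, 0) d)"

text \<open>Rank-one L-graded matrix factorisation  F0 = S(a0) --d0--> F1 = S(a1) --d1--> F0(c) = S(a0+c),
  where M(l)_k = M_(k+l); the S-linear degree-0 maps S(a) -> S(b) are multiplication by
  homogeneous polynomials of degree b - a.\<close>

datatype mf1 = MF1 (deg0: lvec) (deg1: lvec) (d0: spoly) (d1: spoly)

definition is_mf :: "nat \<Rightarrow> nat \<Rightarrow> mf1 \<Rightarrow> bool" where
  "is_mf p q X \<longleftrightarrow>
     homog p q (d0 X) (lminus (deg1 X) (deg0 X)) \<and>
     homog p q (d1 X) (lminus (lplus (deg0 X) vc) (deg1 X)) \<and>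
     d1 X * d0 X = W p q"

definition is_mor :: "nat \<Rightarrow> nat \<Rightarrow> mf1 \<Rightarrow> mf1 \<Rightarrow> spoly \<Rightarrow> spoly \<Rightarrow> bool" where
  "is_mor p q X Y \<phi>0 \<phi>1 \<longleftrightarrow>
     homog p q \<phi>0 (lminus (deg0 Y) (deg0 X)) \<and>
     homog p q \<phi>1 (lminus (deg1 Y) (deg1 X)) \<and>
     d0 Y * \<phi>0 = \<phi>1 * d0 X \<and> d1 Y * \<phi>1 = \<phi>0 * d1 X"

text \<open>Null-homotopic morphisms: h0 : F0 -> G1(-c), h1 : F1 -> G0.\<close>
definition null_htp :: "nat \<Rightarrow> nat \<Rightarrow> mf1 \<Rightarrow> mf1 \<Rightarrow> spoly \<Rightarrow> spoly \<Rightarrow> bool" where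
  "null_htp p q X Y \<phi>0 \<phi>1 \<longleftrightarrow>
     (\<exists>h0 h1. homog p q h0 (lminus (lminus (deg1 Y) vc) (deg0 X)) \<and>
              homog p q h1 (lminus (deg0 Y) (deg1 X)) \<and>
              \<phi>0 = h1 * d0 X + d1 Y * h0 \<and> \<phi>1 = d0 Y * h1 + h0 * d1 X)"

text \<open>Twist (l) and shift [1]; [2] = (c).\<close>
definition twist :: "mf1 \<Rightarrow> lvec \<Rightarrow> mf1" where
  "twist X l = MF1 (lplus (deg0 X) l) (lplus (deg1 X) l) (d0 X) (d1 X)"

definition shift1 :: "mf1 \<Rightarrow> mf1" where
  "shift1 X = MF1 (deg1 X) (lplus (deg0 X) vc) (- d1 X) (- d0 X)"

definition shiftn :: "mf1 \<Rightarrow> int \<Rightarrow> mf1" where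
  "shiftn X n = (if even n then twist X (lsmul (n div 2) vc)
                 else twist (shift1 X) (lsmul (n div 2) vc))"

text \<open>Hom^n(X,Y) = Hom(X, Y[n]) in HMF vanishes.\<close>
definition hom_zero :: "nat \<Rightarrow> nat \<Rightarrow> mf1 \<Rightarrow> mf1 \<Rightarrow> int \<Rightarrow> bool" where
  "hom_zero p q X Y n \<longleftrightarrow>
     (\<forall>\<phi>0 \<phi>1. is_mor p q X (shiftn Y n) \<phi>0 \<phi>1 \<longrightarrow> null_htp p q X (shiftn Y n) \<phi>0 \<phi>1)"

definition exceptional :: "nat \<Rightarrow> nat \<Rightarrow> mf1 \<Rightarrow> bool" where
  "exceptional p q X \<longleftrightarrow>
     (\<forall>\<phi>0 \<phi>1. is_mor p q X X \<phi>0 \<phi>1 \<longrightarrow>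
        (\<exists>t::complex. null_htp p q X X (\<phi>0 - [:[:t:]:]) (\<phi>1 - [:[:t:]:]))) \<and>
     \<not> null_htp p q X X 1 1 \<and>
     (\<forall>n. n \<noteq> 0 \<longrightarrow> hom_zero p q X X n)"

text \<open>K_x = R/(x), stabilised: the matrix factorisation S(-x) --x--> S --W/x--> S(c - x).\<close>
definition Kx :: "nat \<Rightarrow> nat \<Rightarrow> mf1" where
  "Kx p q = MF1 (lminus (0, 0, 0) vx) (0, 0, 0) Xp (Xp ^ (p - 1) * Yp + Yp ^ q)"

definition Kxi :: "nat \<Rightarrow> nat \<Rightarrow> nat \<Rightarrow> mf1" where
  "Kxi p q i = twist (Kx p q) (lsmul (int i + 1 - int p) vx)"

end

theory Submission
  imports Defs
begin

text \<open>A
  morphism from one twist of K_x to an even shift of another is a single homogeneous polynomial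
  \<phi>, null-homotopic as soon as \<phi> lies in (x, y^q); for odd shifts the morphism equations force
  x to divide \<phi>, which already makes it null-homotopic. The grading does the rest: between twists
  differing by d x + k c with |d| \<le> p - 2, a monomial y^j with j < q has the right degree only
  if d = k = j = 0. So only the constant term of an endomorphism survives, and the identity is
  not null-homotopic because 1 \<notin> (x, y^q).\<close>

definition coeff_xy :: "spoly \<Rightarrow> nat \<Rightarrow> nat \<Rightarrow> complex" where
  "coeff_xy f i j = coeff (coeff f j) i"

lemma coeff_xy_ext: "(\<And>i j. coeff_xy f i j = coeff_xy g i j) \<Longrightarrow> f = g"
  unfolding coeff_xy_def by (simp add: poly_eq_iff)

lemma coeff_xy_add [simp]: "coeff_xy (f + g) i j = coeff_xy f i j + coeff_xy g i j"
  and coeff_xy_diff [simp]: "coeff_xy (f - g) i j = coeff_xy f i j - coeff_xy g i j"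
  and coeff_xy_uminus [simp]: "coeff_xy (- f) i j = - coeff_xy f i j"
  and coeff_xy_0 [simp]: "coeff_xy 0 i j = 0"
  and coeff_xy_const [simp]: "coeff_xy [:[:t:]:] i j = (if i = 0 \<and> j = 0 then t else 0)"
  and coeff_xy_1 [simp]: "coeff_xy 1 i j = (if i = 0 \<and> j = 0 then 1 else 0)"
  by (simp_all add: coeff_xy_def coeff_pCons')

lemma coeff_xy_Xp_mult [simp]: "coeff_xy (Xp * f) i j = (if i = 0 then 0 else coeff_xy f (i - 1) j)"
  by (simp add: coeff_xy_def Xp_def coeff_pCons')

lemma coeff_xy_Yp_mult [simp]: "coeff_xy (Yp * f) i j = (if j = 0 then 0 else coeff_xy f i (j - 1))"
  by (simp add: coeff_xy_def Yp_def coeff_pCons')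

lemma coeff_xy_Xp_power_mult [simp]:
  "coeff_xy (Xp ^ k * f) i j = (if k \<le> i then coeff_xy f (i - k) j else 0)"
  by (induction k arbitrary: i) (auto simp: mult.assoc)

lemma coeff_xy_Yp_power_mult [simp]:
  "coeff_xy (Yp ^ k * f) i j = (if k \<le> j then coeff_xy f i (j - k) else 0)"
  by (induction k arbitrary: j) (auto simp: mult.assoc)

lemma coeff_xy_mult_Xp: "coeff_xy (f * Xp) i j = (if i = 0 then 0 else coeff_xy f (i - 1) j)"
  by (metis coeff_xy_Xp_mult mult.commute)

lemma Xp_neq_0: "Xp \<noteq> 0"
  by (simp add: Xp_def)

definition div_x :: "spoly \<Rightarrow> spoly" where
  "div_x f = map_poly (poly_shift 1) f"

definition x_const :: "spoly \<Rightarrow> spoly" where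
  "x_const f = map_poly (\<lambda>c. [:coeff c 0:]) f"

lemma coeff_xy_div_x [simp]: "coeff_xy (div_x f) i j = coeff_xy f (Suc i) j"
  by (simp add: coeff_xy_def div_x_def coeff_map_poly coeff_poly_shift)

lemma coeff_xy_x_const [simp]: "coeff_xy (x_const f) i j = (if i = 0 then coeff_xy f 0 j else 0)"
  by (simp add: coeff_xy_def x_const_def coeff_map_poly coeff_pCons')

lemma coeff_xy_poly_shift [simp]: "coeff_xy (poly_shift k f) i j = coeff_xy f i (j + k)"
  by (simp add: coeff_xy_def coeff_poly_shift)

lemma Xp_div_x_plus_x_const: "Xp * div_x f + x_const f = f"
  by (rule coeff_xy_ext) (auto simp: not0_implies_Suc)

lemma x_const_eq_0_iff: "x_const f = 0 \<longleftrightarrow> (\<forall>j. coeff_xy f 0 j = 0)"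
  by (metis coeff_xy_0 coeff_xy_ext coeff_xy_x_const)

lemma Yp_power_poly_shift_x_const:
  assumes "\<forall>j<k. coeff_xy f 0 j = 0"
  shows "Yp ^ k * poly_shift k (x_const f) = x_const f"
  by (rule coeff_xy_ext) (use assms in \<open>auto simp: not_le\<close>)

lemma Lrel_refl: "Lrel p q D D"
  by (cases D) (auto intro!: exI[of _ 0])

lemma Lrel_trans:
  assumes "Lrel p q D E" and "Lrel p q E F"
  shows "Lrel p q D F"
proof -
  obtain a b c a' b' c' a'' b'' c'' where D: "D = (a, b, c)" and E: "E = (a', b', c')"
    and F: "F = (a'', b'', c'')"
    by (metis prod_cases3)
  obtain m n m' n' where "a - a' = m * int p + n" "b - b' = m + n * int q" "c - c' = - m - n"
    and "a' - a'' = m' * int p + n'" "b' - b'' = m' + n' * int q" "c' - c'' = - m' - n'"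
    using assms by (auto simp: D E F)
  then show ?thesis
    unfolding D F Lrel.simps by (intro exI[of _ "m + m'"] exI[of _ "n + n'"]) (simp add: algebra_simps)
qed

lemma homog_coeff_xy: "homog p q f D \<longleftrightarrow> (\<forall>i j. coeff_xy f i j \<noteq> 0 \<longrightarrow> Lrel p q (int i, int j, 0) D)"
  by (simp add: homog_def coeff_xy_def)

lemma homogD: "homog p q f D \<Longrightarrow> coeff_xy f i j \<noteq> 0 \<Longrightarrow> Lrel p q (int i, int j, 0) D"
  by (simp add: homog_coeff_xy)

declare Lrel.simps [simp del]

lemma homog_Lrel: "homog p q f D \<Longrightarrow> Lrel p q D E \<Longrightarrow> homog p q f E"
  by (meson Lrel_trans homog_coeff_xy)

lemma homog_0 [simp]: "homog p q 0 D"
  by (simp add: homog_coeff_xy)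

lemma homog_const: "homog p q [:[:t:]:] (0, 0, 0)"
  by (simp add: homog_coeff_xy Lrel_refl)

lemma homog_add: "homog p q f D \<Longrightarrow> homog p q g D \<Longrightarrow> homog p q (f + g) D"
  unfolding homog_coeff_xy by (metis add_0 coeff_xy_add)

lemma homog_uminus: "homog p q f D \<Longrightarrow> homog p q (- f) D"
  by (simp add: homog_coeff_xy)

lemma homog_diff: "homog p q f D \<Longrightarrow> homog p q g D \<Longrightarrow> homog p q (f - g) D"
  using homog_add homog_uminus by fastforce

lemma homog_Xp_power_mult:
  assumes "homog p q f (a, b, c)"
  shows "homog p q (Xp ^ k * f) (a + int k, b, c)"
  unfolding homog_coeff_xy
proof (intro allI impI)
  fix i j assume "coeff_xy (Xp ^ k * f) i j \<noteq> 0"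
  then have "k \<le> i" and "coeff_xy f (i - k) j \<noteq> 0"
    by (auto split: if_splits)
  with assms have "Lrel p q (int (i - k), int j, 0) (a, b, c)"
    unfolding homog_coeff_xy by blast
  with \<open>k \<le> i\<close> show "Lrel p q (int i, int j, 0) (a + int k, b, c)"
    by (simp add: Lrel.simps of_nat_diff algebra_simps)
qed

lemma homog_Yp_power_mult:
  assumes "homog p q f (a, b, c)"
  shows "homog p q (Yp ^ k * f) (a, b + int k, c)"
  unfolding homog_coeff_xy
proof (intro allI impI)
  fix i j assume "coeff_xy (Yp ^ k * f) i j \<noteq> 0"
  then have "k \<le> j" and "coeff_xy f i (j - k) \<noteq> 0"
    by (auto split: if_splits)
  with assms have "Lrel p q (int i, int (j - k), 0) (a, b, c)"
    unfolding homog_coeff_xy by blast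
  with \<open>k \<le> j\<close> show "Lrel p q (int i, int j, 0) (a, b + int k, c)"
    by (simp add: Lrel.simps of_nat_diff algebra_simps)
qed

lemma homog_div_x: "homog p q f (a, b, c) \<Longrightarrow> homog p q (div_x f) (a - 1, b, c)"
  by (fastforce simp: homog_coeff_xy Lrel.simps algebra_simps)

lemma homog_x_const: "homog p q f D \<Longrightarrow> homog p q (x_const f) D"
  by (simp add: homog_coeff_xy) (metis of_nat_0)

lemma homog_poly_shift: "homog p q f (a, b, c) \<Longrightarrow> homog p q (poly_shift k f) (a, b - int k, c)"
  by (fastforce simp: homog_coeff_xy Lrel.simps algebra_simps)

text \<open>In degree (d, 0, k) with |d| \<le> p - 2, the only monomial among 1, y, ..., y^(q-1) is 1, in
  degree 0: writing the relation as j + d q = M (1 - p q), the left side is too small for M \<noteq> 0.\<close>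

lemma Lrel_y_power_small_degree:
  assumes p: "p \<ge> 2" and q: "q \<ge> 1" and d: "\<bar>d\<bar> \<le> int p - 2" and j: "j < q"
    and L: "Lrel p q (0, int j, 0) (d, 0, k)"
  shows "d = 0 \<and> k = 0 \<and> j = 0"
proof -
  obtain M N where e1: "- d = M * int p + N" and e2: "int j = M + N * int q" and e3: "- k = - M - N"
    using L by (auto simp: Lrel.simps)
  have N: "N = - d - M * int p"
    using e1 by simp
  have key: "int j + d * int q = M * (1 - int p * int q)"
    using e2 by (simp add: N algebra_simps)
  have pq: "int p * int q \<ge> 2"
    using mult_mono[of 2 "int p" 1 "int q"] p q by simp
  have "\<bar>d\<bar> * int q \<le> (int p - 2) * int q"
    using d by (intro mult_right_mono) auto
  moreover have "\<bar>int j + d * int q\<bar> \<le> int j + \<bar>d\<bar> * int q"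
    using abs_triangle_ineq[of "int j" "d * int q"] by (simp add: abs_mult)
  ultimately have small: "\<bar>M * (1 - int p * int q)\<bar> < int p * int q - 1"
    using j by (simp only: key) (simp add: algebra_simps)
  have M: "M = 0"
  proof (rule ccontr)
    assume "M \<noteq> 0"
    then have "1 * (int p * int q - 1) \<le> \<bar>M\<bar> * (int p * int q - 1)"
      using pq by (intro mult_right_mono) auto
    with small pq show False
      by (simp add: abs_mult)
  qed
  then have jd: "int j = (- d) * int q"
    using key by simp
  have "0 \<le> - d"
    using jd q zero_le_mult_iff[of "- d" "int q"] by auto
  moreover have "- d < 1"
    using jd j mult_less_cancel_right[of "- d" "int q" 1] by auto
  ultimately have "d = 0"
    by linarith
  then show ?thesis
    using M N jd e3 by simp
qed

definition W_div_x :: "nat \<Rightarrow> nat \<Rightarrow> spoly" where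
  "W_div_x p q = Xp ^ (p - 1) * Yp + Yp ^ q"

lemma W_div_x_mult_Xp: "p \<ge> 1 \<Longrightarrow> W_div_x p q * Xp = W p q"
  by (simp add: W_div_x_def W_def algebra_simps power_eq_if)

lemma coeff_xy_W_div_x_mult:
  assumes "p \<ge> 2"
  shows "coeff_xy (W_div_x p q * h) 0 j = (if q \<le> j then coeff_xy h 0 (j - q) else 0)"
proof -
  have "W_div_x p q * h = Xp ^ (p - 1) * (Yp * h) + Yp ^ q * h"
    by (simp add: W_div_x_def algebra_simps)
  then show ?thesis
    using assms by simp
qed

lemma homog_1: "homog p q 1 (0, 0, 0)"
  using homog_const[of p q 1] by (simp add: pCons_one)

lemma homog_Xp: "homog p q Xp (1, 0, 0)"
  using homog_Xp_power_mult[OF homog_1, of p q 1] by simp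

lemma homog_W_div_x: "p \<ge> 1 \<Longrightarrow> homog p q (W_div_x p q) (-1, 0, 1)"
proof -
  assume "p \<ge> 1"
  have "homog p q (Xp ^ (p - 1) * (Yp ^ 1 * 1)) (0 + int (p - 1), 0 + int 1, 0)"
    by (intro homog_Xp_power_mult homog_Yp_power_mult homog_1)
  then have "homog p q (Xp ^ (p - 1) * Yp) (int p - 1, 1, 0)"
    using \<open>p \<ge> 1\<close> by (simp add: of_nat_diff)
  then have x_part: "homog p q (Xp ^ (p - 1) * Yp) (-1, 0, 1)"
    by (rule homog_Lrel) (simp add: Lrel.simps exI[of _ 1])
  have "homog p q (Yp ^ q * 1) (0, 0 + int q, 0)"
    by (intro homog_Yp_power_mult homog_1)
  then have "homog p q (Yp ^ q) (0, int q, 0)"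
    by simp
  then have y_part: "homog p q (Yp ^ q) (-1, 0, 1)"
    by (rule homog_Lrel) (simp add: Lrel.simps exI[of _ 0])
  show ?thesis
    unfolding W_div_x_def using x_part y_part by (rule homog_add)
qed

definition Kx_twist :: "nat \<Rightarrow> nat \<Rightarrow> int \<Rightarrow> int \<Rightarrow> mf1" where
  "Kx_twist p q a m = twist (Kx p q) (a, 0, m)"

lemma Kx_twist_eq: "Kx_twist p q a m = MF1 (a - 1, 0, m) (a, 0, m) Xp (W_div_x p q)"
  by (simp add: Kx_twist_def Kx_def twist_def vx_def W_div_x_def)

lemma Kxi_eq_Kx_twist: "Kxi p q i = Kx_twist p q (int i + 1 - int p) 0"
  by (simp add: Kxi_def Kx_twist_def vx_def)

lemma shiftn_Kx_twist_even: "even n \<Longrightarrow> shiftn (Kx_twist p q a m) n = Kx_twist p q a (m + n div 2)"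
  by (simp add: shiftn_def Kx_twist_eq twist_def vc_def)

lemma shiftn_Kx_twist_odd:
  "odd n \<Longrightarrow> shiftn (Kx_twist p q a m) n = shift1 (Kx_twist p q a (m + n div 2))"
  by (simp add: shiftn_def Kx_twist_eq twist_def shift1_def vc_def)

lemma shift1_Kx_twist_eq:
  "shift1 (Kx_twist p q a m) = MF1 (a, 0, m) (a - 1, 0, m + 1) (- W_div_x p q) (- Xp)"
  by (simp add: shift1_def Kx_twist_eq vc_def)

lemma is_mf_Kx_twist: "p \<ge> 1 \<Longrightarrow> is_mf p q (Kx_twist p q a m)"
  using homog_Xp homog_W_div_x[of p q] W_div_x_mult_Xp[of p q]
  by (simp add: is_mf_def Kx_twist_eq vc_def)

lemma is_mor_Kx_twistD:
  assumes "is_mor p q (Kx_twist p q a m) (Kx_twist p q b m') \<phi>0 \<phi>1"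
  shows "\<phi>1 = \<phi>0" and "homog p q \<phi>0 (b - a, 0, m' - m)"
proof -
  have "Xp * \<phi>0 = \<phi>1 * Xp"
    using assms by (simp add: is_mor_def Kx_twist_eq)
  then show "\<phi>1 = \<phi>0"
    by (metis Xp_neq_0 mult.commute mult_right_cancel)
  show "homog p q \<phi>0 (b - a, 0, m' - m)"
    using assms by (simp add: is_mor_def Kx_twist_eq)
qed

text \<open>A morphism between twists of K_x whose pure y-part has no monomial of y-degree below q is
  null-homotopic: it splits as x \<cdot> div_x \<phi> + y^q h0, and x^(p-1) y h0 is moved from the second
  summand to the first to make the splitting h1 x + (W/x) h0.\<close>

lemma null_htp_Kx_twist:
  assumes p: "p \<ge> 2" and hom: "homog p q \<phi> (b - a, 0, m' - m)"
    and low: "\<forall>j<q. coeff_xy \<phi> 0 j = 0"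
  shows "null_htp p q (Kx_twist p q a m) (Kx_twist p q b m') \<phi> \<phi>"
proof -
  define h0 where "h0 = poly_shift q (x_const \<phi>)"
  define h1 where "h1 = div_x \<phi> - Xp ^ (p - 2) * (Yp * h0)"
  have "homog p q h0 (b - a, - int q, m' - m)"
    unfolding h0_def using homog_poly_shift[OF homog_x_const[OF hom]] by simp
  then have hom0: "homog p q h0 (b - a + 1, 0, m' - 1 - m)"
    by (rule homog_Lrel) (simp add: Lrel.simps exI[of _ 0])
  have "homog p q (Xp ^ (p - 2) * (Yp ^ 1 * h0)) (b - a + int (p - 2), - int q + int 1, m' - m)"
    by (intro homog_Xp_power_mult homog_Yp_power_mult) fact
  then have "homog p q (Xp ^ (p - 2) * (Yp * h0)) (b - a - 1, 0, m' - m)"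
    unfolding power_one_right by (rule homog_Lrel) (use p in \<open>simp add: Lrel.simps exI[of _ 1]\<close>)
  then have hom1: "homog p q h1 (b - a - 1, 0, m' - m)"
    unfolding h1_def by (intro homog_diff homog_div_x) (use hom in simp)+
  have "p - 1 = Suc (p - 2)"
    using p by simp
  then have "Xp * Xp ^ (p - 2) = Xp ^ (p - 1)"
    by simp
  then have "h1 * Xp + W_div_x p q * h0 = Xp * div_x \<phi> + Yp ^ q * h0"
    by (simp add: h1_def W_div_x_def algebra_simps)
  also have "\<dots> = \<phi>"
    using Xp_div_x_plus_x_const Yp_power_poly_shift_x_const[OF low] by (simp add: h0_def)
  finally have split: "\<phi> = h1 * Xp + W_div_x p q * h0" ..
  show ?thesis
    unfolding null_htp_def Kx_twist_eq
    by (rule exI[of _ h0], rule exI[of _ h1]) (use hom0 hom1 split in \<open>simp add: vc_def algebra_simps\<close>)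
qed

lemma null_htp_Kx_twist_shift1:
  assumes p: "p \<ge> 2"
    and mor: "is_mor p q (Kx_twist p q a m) (shift1 (Kx_twist p q b m')) \<phi>0 \<phi>1"
  shows "null_htp p q (Kx_twist p q a m) (shift1 (Kx_twist p q b m')) \<phi>0 \<phi>1"
proof -
  have hom: "homog p q \<phi>0 (b + 1 - a, 0, m' - m)"
    and comm0: "- W_div_x p q * \<phi>0 = \<phi>1 * Xp"
    and comm1: "- Xp * \<phi>1 = \<phi>0 * W_div_x p q"
    using mor unfolding shift1_Kx_twist_eq by (simp_all add: is_mor_def Kx_twist_eq diff_diff_eq2)
  have "coeff_xy \<phi>0 0 j = 0" for j
    using arg_cong[OF comm1, of "\<lambda>f. coeff_xy f 0 (j + q)"] p
    by (simp add: coeff_xy_W_div_x_mult mult.commute[of \<phi>0])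
  then have "x_const \<phi>0 = 0"
    using x_const_eq_0_iff by blast
  then have \<phi>0: "\<phi>0 = div_x \<phi>0 * Xp"
    using Xp_div_x_plus_x_const[of \<phi>0] by (simp add: mult.commute)
  then have "\<phi>1 * Xp = (- W_div_x p q * div_x \<phi>0) * Xp"
    using comm0 by (metis mult.assoc)
  then have \<phi>1: "\<phi>1 = - W_div_x p q * div_x \<phi>0"
    using Xp_neq_0 mult_right_cancel by blast
  have hom': "homog p q (div_x \<phi>0) (b - a, 0, m' - m)"
    using homog_div_x[OF hom] by simp
  show ?thesis
    unfolding null_htp_def shift1_Kx_twist_eq unfolding Kx_twist_eq
    by (rule exI[of _ 0], rule exI[of _ "div_x \<phi>0"]) (use \<phi>0 \<phi>1 hom' in \<open>simp add: vc_def\<close>)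
qed

lemma hom_zero_Kx_twist:
  assumes p: "p \<ge> 2" and q: "q \<ge> 1" and close: "\<bar>b - a\<bar> \<le> int p - 2"
    and nontrivial: "a \<noteq> b \<or> n \<noteq> 0"
  shows "hom_zero p q (Kx_twist p q a m) (Kx_twist p q b m) n"
  unfolding hom_zero_def
proof (intro allI impI)
  fix \<phi>0 \<phi>1
  assume mor: "is_mor p q (Kx_twist p q a m) (shiftn (Kx_twist p q b m) n) \<phi>0 \<phi>1"
  show "null_htp p q (Kx_twist p q a m) (shiftn (Kx_twist p q b m) n) \<phi>0 \<phi>1"
  proof (cases "even n")
    case True
    then have mor': "is_mor p q (Kx_twist p q a m) (Kx_twist p q b (m + n div 2)) \<phi>0 \<phi>1"
      using mor by (simp add: shiftn_Kx_twist_even)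
    have "\<phi>1 = \<phi>0" and hom: "homog p q \<phi>0 (b - a, 0, m + n div 2 - m)"
      using is_mor_Kx_twistD[OF mor'] by simp_all
    have "\<forall>j<q. coeff_xy \<phi>0 0 j = 0"
    proof (intro allI impI, rule ccontr)
      fix j assume "j < q" and "coeff_xy \<phi>0 0 j \<noteq> 0"
      then have "Lrel p q (0, int j, 0) (b - a, 0, n div 2)"
        using homogD[OF hom, of 0 j] by simp
      then have "b - a = 0 \<and> n div 2 = 0"
        using Lrel_y_power_small_degree[OF p q close \<open>j < q\<close>] by blast
      with nontrivial True show False
        by auto
    qed
    then show ?thesis
      using null_htp_Kx_twist[OF p hom] \<open>\<phi>1 = \<phi>0\<close> True
      by (simp add: shiftn_Kx_twist_even)
  next
    case False
    then show ?thesis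
      using null_htp_Kx_twist_shift1[OF p] mor by (simp add: shiftn_Kx_twist_odd)
  qed
qed

lemma Kx_twist_id_not_null_htp:
  assumes "p \<ge> 2" and "q \<ge> 1"
  shows "\<not> null_htp p q (Kx_twist p q a m) (Kx_twist p q a m) 1 1"
proof
  assume "null_htp p q (Kx_twist p q a m) (Kx_twist p q a m) 1 1"
  then obtain h0 h1 where "1 = h1 * Xp + W_div_x p q * h0"
    unfolding null_htp_def Kx_twist_eq by auto
  then have "coeff_xy 1 0 0 = coeff_xy (h1 * Xp + W_div_x p q * h0) 0 0"
    by simp
  then show False
    using assms by (simp add: coeff_xy_mult_Xp coeff_xy_W_div_x_mult)
qed

lemma Kx_twist_endomorphism_scalar:
  assumes p: "p \<ge> 2" and q: "q \<ge> 1"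
    and mor: "is_mor p q (Kx_twist p q a m) (Kx_twist p q a m) \<phi>0 \<phi>1"
  shows "null_htp p q (Kx_twist p q a m) (Kx_twist p q a m)
           (\<phi>0 - [:[:coeff_xy \<phi>0 0 0:]:]) (\<phi>1 - [:[:coeff_xy \<phi>0 0 0:]:])"
proof -
  define \<psi> where "\<psi> = \<phi>0 - [:[:coeff_xy \<phi>0 0 0:]:]"
  have "\<phi>1 = \<phi>0" and "homog p q \<phi>0 (0, 0, 0)"
    using is_mor_Kx_twistD[OF mor] by simp_all
  then have hom: "homog p q \<psi> (a - a, 0, m - m)"
    unfolding \<psi>_def using homog_diff homog_const by simp
  have "\<forall>j<q. coeff_xy \<psi> 0 j = 0"
  proof (intro allI impI, rule ccontr)
    fix j assume "j < q" and nz: "coeff_xy \<psi> 0 j \<noteq> 0"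
    then have "Lrel p q (0, int j, 0) (0, 0, 0)"
      using homogD[OF hom, of 0 j] by simp
    then have "j = 0"
      using Lrel_y_power_small_degree[OF p q _ \<open>j < q\<close>, of 0 0] p by simp
    with nz show False
      by (simp add: \<psi>_def)
  qed
  from null_htp_Kx_twist[OF p hom this] show ?thesis
    unfolding \<open>\<phi>1 = \<phi>0\<close> \<psi>_def .
qed

lemma exceptional_Kx_twist:
  assumes "p \<ge> 2" and "q \<ge> 1"
  shows "exceptional p q (Kx_twist p q a m)"
  unfolding exceptional_def
proof (intro conjI allI impI)
  fix \<phi>0 \<phi>1 assume "is_mor p q (Kx_twist p q a m) (Kx_twist p q a m) \<phi>0 \<phi>1"
  then show "\<exists>t. null_htp p q (Kx_twist p q a m) (Kx_twist p q a m) (\<phi>0 - [:[:t:]:]) (\<phi>1 - [:[:t:]:])"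
    using Kx_twist_endomorphism_scalar[OF assms] by blast
next
  show "\<not> null_htp p q (Kx_twist p q a m) (Kx_twist p q a m) 1 1"
    using Kx_twist_id_not_null_htp[OF assms] .
next
  fix n :: int assume "n \<noteq> 0"
  then show "hom_zero p q (Kx_twist p q a m) (Kx_twist p q a m) n"
    using hom_zero_Kx_twist[OF assms] assms(1) by simp
qed

theorem lemma2p4:
  fixes p q :: nat
  assumes "p \<ge> 2" and "q \<ge> 2"
  shows "(\<forall>i \<in> {1..p - 1}. is_mf p q (Kxi p q i) \<and> exceptional p q (Kxi p q i)) \<and>
         (\<forall>i \<in> {1..p - 1}. \<forall>j \<in> {1..p - 1}. i \<noteq> j \<longrightarrow>
            (\<forall>n::int. hom_zero p q (Kxi p q i) (Kxi p q j) n))"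
proof -
  have p: "p \<ge> 2" and q: "q \<ge> 1"
    using assms by simp_all
  have "hom_zero p q (Kxi p q i) (Kxi p q j) n"
    if "i \<in> {1..p - 1}" and "j \<in> {1..p - 1}" and "i \<noteq> j" for i j n
    unfolding Kxi_eq_Kx_twist using that by (intro hom_zero_Kx_twist[OF p q]) auto
  moreover have "is_mf p q (Kxi p q i) \<and> exceptional p q (Kxi p q i)" for i
    unfolding Kxi_eq_Kx_twist using is_mf_Kx_twist exceptional_Kx_twist[OF p q] p by simp
  ultimately show ?thesis
    by blast
qed

end
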